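(* Let $X$ and $Y$ be discrete random variables on finite alphabets $\mathcal{X}$ and $\mathcal{Y}$ with joint distribution $P_{XY}$ and marginal $q_Y$. Define, for $\varepsilon\in[\mathsf{P}_{\mathsf{c}}(X),\mathsf{P}_{\mathsf{c}}(X|Y)]$, $$\underline{\mathcal{h}}(\varepsilon)=\sup\{\mathsf{P}_{\mathsf{c}}(Y|Z): P_{Z|Y},\ \mathcal{Z}=\mathcal{Y},\ X - Y - Z,\ \mathsf{P}_{\mathsf{c}}(X|Z)\le\varepsilon\}.$$ If $\mathsf{P}_{\mathsf{c}}(X)<\mathsf{P}_{\mathsf{c}}(X|Y)$, then there exists $\varepsilon_{\mathsf L}\in(\mathsf{P}_{\mathsf{c}}(X),\mathsf{P}_{\mathsf{c}}(X|Y))$ such that $\underline{\mathcal{h}}$ is linear on $[\varepsilon_{\mathsf L},\mathsf{P}_{\mathsf{c}}(X|Y)]$; in particular, for every $\varepsilon\in[\varepsilon_{\mathsf L},\mathsf{P}_{\mathsf{c}}(X|Y)]$, $$\underline{\mathcal{h}}(\varepsilon)=1-(\mathsf{P}_{\mathsf{c}}(X|Y)-\varepsilon)\,\underline{\mathcal{h}}'(\mathsf{P}_{\mathsf{c}}(X|Y)),$$ where $\underline{\mathcal{h}}'(\mathsf{P}_{\mathsf{c}}(X|Y))$ denotes the left derivative of $\underline{\mathcal{h}}$ at $\mathsf{P}_{\mathsf{c}}(X|Y)$. Moreover, if $q_Y(y)>0$ for all $y\in\mathcal{Y}$ and for each $y\in\mathcal{Y}$ there exists a (unique) $x_y\in\mathcal{X}$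 with $P_{X|Y}(x_y|y)>P_{X|Y}(x|y)$ for all $x\ne x_y$, then $$\underline{\mathcal{h}}'(\mathsf{P}_{\mathsf{c}}(X|Y))=\min_{(y,z)\in\mathcal{Y}\times\mathcal{Y}}\frac{q_Y(y)}{P_{XY}(x_y,y)-P_{XY}(x_z,y)},$$ with the convention $\frac{x}{0}=+\infty$ for $x>0$. In addition, if $(y_0,z_0)\in\mathcal{Y}\times\mathcal{Y}$ attains this minimum, then there exists $\varepsilon_{\mathsf L}^{y_0,z_0}<\mathsf{P}_{\mathsf{c}}(X|Y)$ such that the $N$-ary Z-channel $\mathsf{Z}^{y_0,z_0}(\zeta^{y_0,z_0}(\varepsilon))$ achieves $\underline{\mathcal{h}}(\varepsilon)$ for every $\varepsilon\in[\varepsilon_{\mathsf L}^{y_0,z_0},\mathsf{P}_{\mathsf{c}}(X|Y)]$, where $$\zeta^{y_0,z_0}(\varepsilon)=\frac{\mathsf{P}_{\mathsf{c}}(X|Y)-\varepsilon}{P_{XY}(x_{y_0},y_0)-P_{XY}(x_{z_0},y_0)}.$$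
   Context: $\mathsf{P}_{\mathsf{c}}(X)=\max_xP_X(x)$ and $\mathsf{P}_{\mathsf{c}}(X|Z)=\sum_z\max_xP_{XZ}(x,z)$. In the definition of $\underline{\mathcal{h}}$, the channel $P_{Z|Y}$ has output alphabet equal to $\mathcal{Y}$ and $X - Y - Z$ is a Markov chain. For $(y_0,z_0)\in\mathcal{Y}\times\mathcal{Y}$ and $\gamma\in[0,1]$, the $N$-ary Z-channel $\mathsf{Z}^{y_0,z_0}(\gamma)$ (with $N=|\mathcal{Y}|$) is the channel $\mathsf{W}$ with input and output alphabet $\mathcal{Y}$ given by $\mathsf{W}(y|y)=1$ for $y\ne y_0$, $\mathsf{W}(z_0|y_0)=\gamma$, $\mathsf{W}(y_0|y_0)=1-\gamma$. "Achieves $\underline{\mathcal{h}}(\varepsilon)$" means it satisfies the constraint $\mathsf{P}_{\mathsf{c}}(X|Z)\le\varepsilon$ and attains $\mathsf{P}_{\mathsf{c}}(Y|Z)=\underline{\mathcal{h}}(\varepsilon)$. *)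

theory Defs
  imports "HOL-Analysis.Analysis" "HOL-Library.Extended_Real"
begin

text \<open>Joint distribution P x y = P_XY(x,y) on finite alphabets 'a (for X) and 'b (for Y).
  A channel W y z = P_{Z|Y}(z|y) with output alphabet 'b (Z alphabet = Y alphabet).
  The Markov chain X - Y - Z is encoded by P_XZ(x,z) = sum_y P_XY(x,y) W(z|y).\<close>

definition is_pmf2 :: "('a::finite \<Rightarrow> 'b::finite \<Rightarrow> real) \<Rightarrow> bool" where
  "is_pmf2 P \<longleftrightarrow> (\<forall>x y. 0 \<le> P x y) \<and> (\<Sum>x\<in>UNIV. \<Sum>y\<in>UNIV. P x y) = 1"

definition qY :: "('a::finite \<Rightarrow> 'b::finite \<Rightarrow> real) \<Rightarrow> 'b \<Rightarrow> real" where
  "qY P y = (\<Sum>x\<in>UNIV. P x y)"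

definition pc_X :: "('a::finite \<Rightarrow> 'b::finite \<Rightarrow> real) \<Rightarrow> real" where
  "pc_X P = Max (range (\<lambda>x. \<Sum>y\<in>UNIV. P x y))"

definition pc_XgY :: "('a::finite \<Rightarrow> 'b::finite \<Rightarrow> real) \<Rightarrow> real" where
  "pc_XgY P = (\<Sum>y\<in>UNIV. Max (range (\<lambda>x. P x y)))"

definition is_channel :: "('b::finite \<Rightarrow> 'b \<Rightarrow> real) \<Rightarrow> bool" where
  "is_channel W \<longleftrightarrow> (\<forall>y z. 0 \<le> W y z) \<and> (\<forall>y. (\<Sum>z\<in>UNIV. W y z) = 1)"

definition pc_XgZ :: "('a::finite \<Rightarrow> 'b::finite \<Rightarrow> real) \<Rightarrow> ('b \<Rightarrow> 'b \<Rightarrow> real) \<Rightarrow> real" where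
  "pc_XgZ P W = (\<Sum>z\<in>UNIV. Max (range (\<lambda>x. \<Sum>y\<in>UNIV. P x y * W y z)))"

definition pc_YgZ :: "('a::finite \<Rightarrow> 'b::finite \<Rightarrow> real) \<Rightarrow> ('b \<Rightarrow> 'b \<Rightarrow> real) \<Rightarrow> real" where
  "pc_YgZ P W = (\<Sum>z\<in>UNIV. Max (range (\<lambda>y. qY P y * W y z)))"

definition h_low :: "('a::finite \<Rightarrow> 'b::finite \<Rightarrow> real) \<Rightarrow> real \<Rightarrow> real" where
  "h_low P \<epsilon> = Sup {pc_YgZ P W | W. is_channel W \<and> pc_XgZ P W \<le> \<epsilon>}"

definition zchan :: "'b \<Rightarrow> 'b \<Rightarrow> real \<Rightarrow> 'b \<Rightarrow> 'b \<Rightarrow> real" where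
  "zchan y0 z0 \<gamma> y z =
     (if y \<noteq> y0 then (if z = y then 1 else 0)
      else if z = z0 then \<gamma> else if z = y0 then 1 - \<gamma> else 0)"

definition achieves :: "('a::finite \<Rightarrow> 'b::finite \<Rightarrow> real) \<Rightarrow> ('b \<Rightarrow> 'b \<Rightarrow> real) \<Rightarrow> real \<Rightarrow> bool" where
  "achieves P W \<epsilon> \<longleftrightarrow> is_channel W \<and> pc_XgZ P W \<le> \<epsilon> \<and> pc_YgZ P W = h_low P \<epsilon>"

definition ratio :: "('a::finite \<Rightarrow> 'b::finite \<Rightarrow> real) \<Rightarrow> ('b \<Rightarrow> 'a) \<Rightarrow> 'b \<Rightarrow> 'b \<Rightarrow> ereal" where
  "ratio P xs y z =
     (let d = P (xs y) y - P (xs z) y in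
      if d = 0 then \<infinity> else ereal (qY P y / d))"

end

theory Submission
  imports Defs
begin

text \<open>Fix an output \<open>y'\<close> and weights \<open>v \<ge> 0\<close> on the other inputs with \<open>\<Sum>\<^sub>y q(y) v(y) = 1\<close>.
  Sending the fraction \<open>\<gamma> v(y)\<close> of every input \<open>y\<close> to \<open>y'\<close> lowers \<open>P\<^sub>c(Y|Z)\<close> by at most \<open>\<gamma>\<close>, and
  lowers \<open>P\<^sub>c(X|Z)\<close> by at least \<open>\<gamma>\<close> times the rate of \<open>v\<close>, the least value of
  \<open>\<Sum>\<^sub>y v(y) (max\<^sub>x P(x,y) - P(x,y))\<close> over the maximisers \<open>x\<close> of column \<open>y'\<close>, as long as the moved
  mass is too small for any other input to overtake them. With \<open>M\<close> the supremum of all rates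
  this gives \<open>h(\<epsilon>) \<ge> 1 - (P\<^sub>c(X|Y) - \<epsilon>)/M\<close> near \<open>P\<^sub>c(X|Y)\<close>. Conversely, charging each output
  column of an arbitrary channel to its most likely input \<open>y'\<close> shows
  \<open>P\<^sub>c(X|Y) - P\<^sub>c(X|Z) \<le> M (1 - P\<^sub>c(Y|Z))\<close> for every channel, so \<open>h\<close> is affine with slope \<open>1/M\<close>
  near \<open>P\<^sub>c(X|Y)\<close>. If every column has a unique maximiser \<open>x\<^sub>y\<close>, the rate is linear in \<open>v\<close> and
  is maximised by a point mass, so \<open>M = max (P(x\<^sub>y,y) - P(x\<^sub>z,y))/q(y)\<close> and the optimal merging is
  a Z-channel.\<close>

lemma pmf_nonneg: "is_pmf2 P \<Longrightarrow> 0 \<le> P x y"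
  by (simp add: is_pmf2_def)

lemma qY_nonneg: "is_pmf2 P \<Longrightarrow> 0 \<le> qY P y"
  unfolding qY_def by (simp add: sum_nonneg pmf_nonneg)

lemma le_qY: "is_pmf2 P \<Longrightarrow> P x y \<le> qY P y"
  unfolding qY_def by (rule member_le_sum) (auto simp: pmf_nonneg)

lemma sum_qY: "is_pmf2 P \<Longrightarrow> (\<Sum>y\<in>UNIV. qY P y) = 1"
  unfolding qY_def is_pmf2_def by (subst sum.swap) simp

lemma qY_le_1: "is_pmf2 P \<Longrightarrow> qY P y \<le> 1"
  using member_le_sum[of y UNIV "qY P"] qY_nonneg[of P] sum_qY[of P] by simp

lemma pmf_le_1: "is_pmf2 P \<Longrightarrow> P x y \<le> 1"
  using le_qY qY_le_1 order_trans by blast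

lemma pmf_eq_0_if_qY_eq_0: "is_pmf2 P \<Longrightarrow> qY P y = 0 \<Longrightarrow> P x y = 0"
  using le_qY[of P x y] pmf_nonneg[of P x y] by simp

definition col_max :: "('a::finite \<Rightarrow> 'b::finite \<Rightarrow> real) \<Rightarrow> 'b \<Rightarrow> real" where
  "col_max P y = Max (range (\<lambda>x. P x y))"

definition argmax_col :: "('a::finite \<Rightarrow> 'b::finite \<Rightarrow> real) \<Rightarrow> 'b \<Rightarrow> 'a set" where
  "argmax_col P y = {x. P x y = col_max P y}"

lemma col_max_ge: "P x y \<le> col_max P y"
  unfolding col_max_def by (rule Max_ge) auto

lemma argmax_col_nonempty: "\<exists>x. x \<in> argmax_col P y"
proof -
  have "col_max P y \<in> range (\<lambda>x. P x y)"
    unfolding col_max_def by (rule Max_in) auto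
  then show ?thesis by (auto simp: argmax_col_def)
qed

lemma pc_XgY_eq_sum_col_max: "pc_XgY P = (\<Sum>y\<in>UNIV. col_max P y)"
  by (simp add: pc_XgY_def col_max_def)

lemma col_max_le_qY: "is_pmf2 P \<Longrightarrow> col_max P y \<le> qY P y"
  using argmax_col_nonempty[of P y] le_qY[of P] unfolding argmax_col_def by (metis mem_Collect_eq)

lemma col_max_eq_0_if_qY_eq_0: "is_pmf2 P \<Longrightarrow> qY P y = 0 \<Longrightarrow> col_max P y = 0"
  using argmax_col_nonempty[of P y] pmf_eq_0_if_qY_eq_0[of P y]
  unfolding argmax_col_def by (metis mem_Collect_eq)

lemma no_input_maximises_all_columns:
  assumes pmf: "is_pmf2 P" and gap: "pc_X P < pc_XgY P"
  obtains y where "0 < qY P y" and "P x y < col_max P y"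
proof -
  have "\<exists>y. 0 < qY P y \<and> P x y < col_max P y"
  proof (rule ccontr)
    assume none: "\<not> ?thesis"
    have "P x y = col_max P y" for y
    proof (cases "qY P y = 0")
      case True
      then show ?thesis using pmf pmf_eq_0_if_qY_eq_0 col_max_eq_0_if_qY_eq_0 by metis
    next
      case False
      then have "0 < qY P y" using qY_nonneg[OF pmf, of y] by simp
      then show ?thesis using none col_max_ge[of P x y] by (metis order_le_less)
    qed
    then have "pc_XgY P = (\<Sum>y\<in>UNIV. P x y)" by (simp add: pc_XgY_eq_sum_col_max)
    also have "\<dots> \<le> pc_X P" unfolding pc_X_def by (rule Max_ge) auto
    finally show False using gap by simp
  qed
  then show ?thesis using that by blast
qed

definition shift_weights :: "('a::finite \<Rightarrow> 'b::finite \<Rightarrow> real) \<Rightarrow> 'b \<Rightarrow> ('b \<Rightarrow> real) set" where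
  "shift_weights P y' = {v. (\<forall>y. 0 \<le> v y) \<and> v y' = 0 \<and> (\<forall>y. qY P y = 0 \<longrightarrow> v y = 0)
      \<and> (\<Sum>y\<in>UNIV. qY P y * v y) = 1}"

definition shift_rate :: "('a::finite \<Rightarrow> 'b::finite \<Rightarrow> real) \<Rightarrow> 'b \<Rightarrow> ('b \<Rightarrow> real) \<Rightarrow> real" where
  "shift_rate P y' v = Min ((\<lambda>x. \<Sum>y\<in>UNIV. v y * (col_max P y - P x y)) ` argmax_col P y')"

definition shift_rates :: "('a::finite \<Rightarrow> 'b::finite \<Rightarrow> real) \<Rightarrow> real set" where
  "shift_rates P = {shift_rate P y' v | y' v. v \<in> shift_weights P y'}"

definition max_rate :: "('a::finite \<Rightarrow> 'b::finite \<Rightarrow> real) \<Rightarrow> real" where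
  "max_rate P = Sup (shift_rates P)"

lemma shift_rate_le: "x \<in> argmax_col P y' \<Longrightarrow> shift_rate P y' v \<le> (\<Sum>y\<in>UNIV. v y * (col_max P y - P x y))"
  unfolding shift_rate_def by (rule Min_le) auto

lemma shift_rate_attained:
  obtains x where "x \<in> argmax_col P y'" and "shift_rate P y' v = (\<Sum>y\<in>UNIV. v y * (col_max P y - P x y))"
proof -
  have "shift_rate P y' v \<in> (\<lambda>x. \<Sum>y\<in>UNIV. v y * (col_max P y - P x y)) ` argmax_col P y'"
    unfolding shift_rate_def by (rule Min_in) (use argmax_col_nonempty in auto)
  then show ?thesis using that by blast
qed

lemma shift_rate_le_1:
  assumes pmf: "is_pmf2 P" and v: "v \<in> shift_weights P y'"
  shows "shift_rate P y' v \<le> 1"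
proof -
  obtain x where x: "x \<in> argmax_col P y'" using argmax_col_nonempty by blast
  have "shift_rate P y' v \<le> (\<Sum>y\<in>UNIV. v y * (col_max P y - P x y))" by (rule shift_rate_le[OF x])
  also have "\<dots> \<le> (\<Sum>y\<in>UNIV. qY P y * v y)"
  proof (rule sum_mono)
    fix y
    have "col_max P y - P x y \<le> qY P y"
      using col_max_le_qY[OF pmf, of y] pmf_nonneg[OF pmf, of x y] by linarith
    then show "v y * (col_max P y - P x y) \<le> qY P y * v y"
      using v by (simp add: shift_weights_def mult.commute mult_left_mono)
  qed
  finally show ?thesis using v by (simp add: shift_weights_def)
qed

lemma bdd_above_shift_rates: "is_pmf2 P \<Longrightarrow> bdd_above (shift_rates P)"
  unfolding shift_rates_def bdd_above_def using shift_rate_le_1 by blast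

lemma shift_rate_le_max_rate:
  "is_pmf2 P \<Longrightarrow> v \<in> shift_weights P y' \<Longrightarrow> shift_rate P y' v \<le> max_rate P"
  unfolding max_rate_def
  by (rule cSup_upper[OF _ bdd_above_shift_rates]) (auto simp: shift_rates_def)

lemma exists_pos_shift_rate:
  assumes pmf: "is_pmf2 P" and gap: "pc_X P < pc_XgY P"
  shows "\<exists>v \<in> shift_weights P y'. 0 < shift_rate P y' v"
proof -
  define S where "S = {y. y \<noteq> y' \<and> 0 < qY P y}"
  define s where "s = (\<Sum>y\<in>S. qY P y)"
  have witness_in_S: "\<exists>y\<in>S. P x y < col_max P y" if "x \<in> argmax_col P y'" for x
  proof -
    obtain y where "0 < qY P y" "P x y < col_max P y"
      using no_input_maximises_all_columns[OF pmf gap] by blast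
    moreover then have "y \<noteq> y'" using that by (auto simp: argmax_col_def)
    ultimately show ?thesis by (auto simp: S_def)
  qed
  obtain y1 where "y1 \<in> S" using witness_in_S argmax_col_nonempty by blast
  then have s_pos: "0 < s"
    unfolding s_def using member_le_sum[of y1 S "qY P"] qY_nonneg[OF pmf] by (fastforce simp: S_def)
  define v where "v y = (if y \<in> S then 1 / s else 0)" for y
  have v_nonneg: "0 \<le> v y" for y using s_pos by (simp add: v_def)
  have "(\<Sum>y\<in>UNIV. qY P y * v y) = (\<Sum>y\<in>S. qY P y / s)"
    unfolding v_def by (simp add: if_distrib sum.If_cases)
  also have "\<dots> = 1" using s_pos by (simp add: s_def sum_divide_distrib[symmetric])
  finally have v_weights: "v \<in> shift_weights P y'"
    using v_nonneg unfolding shift_weights_def by (auto simp: v_def S_def)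
  obtain x where x: "x \<in> argmax_col P y'"
    and rate: "shift_rate P y' v = (\<Sum>y\<in>UNIV. v y * (col_max P y - P x y))"
    using shift_rate_attained by blast
  obtain y2 where y2: "y2 \<in> S" "P x y2 < col_max P y2" using witness_in_S[OF x] by blast
  have terms_nonneg: "0 \<le> v y * (col_max P y - P x y)" for y
    using v_nonneg col_max_ge[of P x y] by simp
  have "0 < v y2 * (col_max P y2 - P x y2)" using y2 s_pos by (simp add: v_def)
  also have "\<dots> \<le> shift_rate P y' v"
    unfolding rate by (rule member_le_sum) (use terms_nonneg in auto)
  finally show ?thesis using v_weights by blast
qed

lemma max_rate_pos: "is_pmf2 P \<Longrightarrow> pc_X P < pc_XgY P \<Longrightarrow> 0 < max_rate P"
  using exists_pos_shift_rate shift_rate_le_max_rate by (metis order_less_le_trans)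

lemma shift_rates_nonempty: "is_pmf2 P \<Longrightarrow> pc_X P < pc_XgY P \<Longrightarrow> shift_rates P \<noteq> {}"
  using exists_pos_shift_rate unfolding shift_rates_def by blast

lemma weighted_deficit_le_max_rate:
  assumes pmf: "is_pmf2 P" and u: "\<forall>y. 0 \<le> u y" "u y' = 0" "\<forall>y. qY P y = 0 \<longrightarrow> u y = 0"
  obtains x where "x \<in> argmax_col P y'"
    and "(\<Sum>y\<in>UNIV. u y * (col_max P y - P x y)) \<le> max_rate P * (\<Sum>y\<in>UNIV. qY P y * u y)"
proof (cases "(\<Sum>y\<in>UNIV. qY P y * u y) = 0")
  case True
  then have "qY P y * u y = 0" for y
    using sum_nonneg_eq_0_iff[of UNIV "\<lambda>y. qY P y * u y"] u qY_nonneg[OF pmf] by simp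
  then have "u y = 0" for y using u by auto
  moreover obtain x where "x \<in> argmax_col P y'" using argmax_col_nonempty by blast
  ultimately show ?thesis using that True by simp
next
  case False
  define S where "S = (\<Sum>y\<in>UNIV. qY P y * u y)"
  have S_pos: "0 < S"
    using False u qY_nonneg[OF pmf] by (simp add: S_def sum_nonneg order_le_neq_trans)
  have "(\<lambda>y. u y / S) \<in> shift_weights P y'"
    using u S_pos by (auto simp: shift_weights_def sum_divide_distrib[symmetric] S_def)
  moreover obtain x where x: "x \<in> argmax_col P y'"
    and rate: "shift_rate P y' (\<lambda>y. u y / S) = (\<Sum>y\<in>UNIV. u y / S * (col_max P y - P x y))"
    using shift_rate_attained by blast
  ultimately have "(\<Sum>y\<in>UNIV. u y / S * (col_max P y - P x y)) \<le> max_rate P"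
    using shift_rate_le_max_rate[OF pmf] by metis
  then have "(\<Sum>y\<in>UNIV. u y * (col_max P y - P x y)) / S \<le> max_rate P"
    by (simp add: sum_divide_distrib)
  then show ?thesis using that x S_pos by (simp add: S_def pos_divide_le_eq mult.commute)
qed

lemma column_deficit_le_max_rate:
  assumes pmf: "is_pmf2 P" and w: "\<forall>y. 0 \<le> w y"
  shows "(\<Sum>y\<in>UNIV. w y * col_max P y) - Max (range (\<lambda>x. \<Sum>y\<in>UNIV. P x y * w y))
     \<le> max_rate P * ((\<Sum>y\<in>UNIV. qY P y * w y) - Max (range (\<lambda>y. qY P y * w y)))"
proof -
  have "Max (range (\<lambda>y. qY P y * w y)) \<in> range (\<lambda>y. qY P y * w y)" by (rule Max_in) auto
  then obtain y' where y': "Max (range (\<lambda>y. qY P y * w y)) = qY P y' * w y'" by blast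
  define u where "u y = (if y = y' \<or> qY P y = 0 then 0 else w y)" for y
  have "(\<Sum>y\<in>UNIV. qY P y * w y) = (\<Sum>y\<in>UNIV. qY P y * u y + (if y = y' then qY P y' * w y' else 0))"
    by (rule sum.cong) (auto simp: u_def)
  then have rhs: "(\<Sum>y\<in>UNIV. qY P y * w y) - qY P y' * w y' = (\<Sum>y\<in>UNIV. qY P y * u y)"
    by (simp add: sum.distrib)
  have u: "\<forall>y. 0 \<le> u y" "u y' = 0" "\<forall>y. qY P y = 0 \<longrightarrow> u y = 0"
    using w by (simp_all add: u_def)
  obtain x where x: "x \<in> argmax_col P y'"
    and bound: "(\<Sum>y\<in>UNIV. u y * (col_max P y - P x y)) \<le> max_rate P * (\<Sum>y\<in>UNIV. qY P y * u y)"
    using weighted_deficit_le_max_rate[OF pmf u] by blast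
  have "w y * col_max P y - P x y * w y = u y * (col_max P y - P x y)" for y
    using x pmf_eq_0_if_qY_eq_0[OF pmf, of y x] col_max_eq_0_if_qY_eq_0[OF pmf, of y]
    by (cases "y = y'"; cases "qY P y = 0") (auto simp: u_def argmax_col_def algebra_simps)
  then have "(\<Sum>y\<in>UNIV. w y * col_max P y) - (\<Sum>y\<in>UNIV. P x y * w y)
      = (\<Sum>y\<in>UNIV. u y * (col_max P y - P x y))"
    by (simp add: sum_subtractf[symmetric])
  moreover have "(\<Sum>y\<in>UNIV. P x y * w y) \<le> Max (range (\<lambda>x. \<Sum>y\<in>UNIV. P x y * w y))"
    by (rule Max_ge) auto
  ultimately show ?thesis unfolding y' rhs using bound by linarith
qed

lemma sum_channel_outputs:
  assumes "is_channel W"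
  shows "(\<Sum>z\<in>UNIV. \<Sum>y\<in>UNIV. f y * W y z) = (\<Sum>y\<in>UNIV. f y)"
proof -
  have "(\<Sum>z\<in>UNIV. \<Sum>y\<in>UNIV. f y * W y z) = (\<Sum>y\<in>UNIV. f y * (\<Sum>z\<in>UNIV. W y z))"
    by (subst sum.swap) (simp add: sum_distrib_left)
  then show ?thesis using assms by (simp add: is_channel_def)
qed

lemma pc_XgY_minus_pc_XgZ_le:
  assumes pmf: "is_pmf2 P" and W: "is_channel W"
  shows "pc_XgY P - pc_XgZ P W \<le> max_rate P * (1 - pc_YgZ P W)"
proof -
  have "pc_XgY P - pc_XgZ P W = (\<Sum>z\<in>UNIV. (\<Sum>y\<in>UNIV. W y z * col_max P y)
          - Max (range (\<lambda>x. \<Sum>y\<in>UNIV. P x y * W y z)))"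
    using sum_channel_outputs[OF W, of "col_max P"]
    by (simp add: pc_XgY_eq_sum_col_max pc_XgZ_def sum_subtractf mult.commute)
  also have "\<dots> \<le> (\<Sum>z\<in>UNIV. max_rate P * ((\<Sum>y\<in>UNIV. qY P y * W y z)
          - Max (range (\<lambda>y. qY P y * W y z))))"
    by (rule sum_mono, rule column_deficit_le_max_rate[OF pmf]) (use W in \<open>simp add: is_channel_def\<close>)
  also have "\<dots> = max_rate P * ((\<Sum>z\<in>UNIV. \<Sum>y\<in>UNIV. qY P y * W y z) - pc_YgZ P W)"
    by (simp add: pc_YgZ_def sum_subtractf sum_distrib_left right_diff_distrib)
  also have "\<dots> = max_rate P * (1 - pc_YgZ P W)"
    using sum_channel_outputs[OF W, of "qY P"] sum_qY[OF pmf] by simp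
  finally show ?thesis .
qed

lemma pc_YgZ_le_1:
  assumes pmf: "is_pmf2 P" and W: "is_channel W"
  shows "pc_YgZ P W \<le> 1"
proof -
  have "qY P y * W y z \<le> (\<Sum>y\<in>UNIV. qY P y * W y z)" for y z
    by (rule member_le_sum) (use W qY_nonneg[OF pmf] in \<open>auto simp: is_channel_def\<close>)
  then have "pc_YgZ P W \<le> (\<Sum>z\<in>UNIV. \<Sum>y\<in>UNIV. qY P y * W y z)"
    unfolding pc_YgZ_def by (intro sum_mono Max.boundedI) auto
  also have "\<dots> = 1" using sum_channel_outputs[OF W, of "qY P"] sum_qY[OF pmf] by simp
  finally show ?thesis .
qed

lemma h_low_ge:
  assumes "is_pmf2 P" "is_channel W" "pc_XgZ P W \<le> \<epsilon>"
  shows "pc_YgZ P W \<le> h_low P \<epsilon>"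
  unfolding h_low_def
  by (rule cSup_upper) (use assms pc_YgZ_le_1 in \<open>auto simp: bdd_above_def\<close>)

lemma h_low_le:
  assumes "is_channel W0" "pc_XgZ P W0 \<le> \<epsilon>"
    and "\<And>W. is_channel W \<Longrightarrow> pc_XgZ P W \<le> \<epsilon> \<Longrightarrow> pc_YgZ P W \<le> B"
  shows "h_low P \<epsilon> \<le> B"
  unfolding h_low_def by (rule cSup_least) (use assms in auto)

definition merge_channel :: "'b \<Rightarrow> ('b \<Rightarrow> real) \<Rightarrow> 'b \<Rightarrow> 'b \<Rightarrow> real" where
  "merge_channel y' u y z = (if z = y' then u y else 0) + (if z = y then 1 - u y else 0)"

lemma is_channel_merge_channel: "\<forall>y. 0 \<le> u y \<and> u y \<le> 1 \<Longrightarrow> is_channel (merge_channel y' u)"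
  by (auto simp: is_channel_def merge_channel_def sum.distrib)

lemma pc_YgZ_merge_channel_ge:
  assumes pmf: "is_pmf2 P" and u: "\<forall>y. 0 \<le> u y"
  shows "1 - (\<Sum>y\<in>UNIV. qY P y * u y) \<le> pc_YgZ P (merge_channel y' u)"
proof -
  have "1 - (\<Sum>y\<in>UNIV. qY P y * u y) = (\<Sum>z\<in>UNIV. qY P z * (1 - u z))"
    using sum_qY[OF pmf] by (simp add: right_diff_distrib sum_subtractf)
  also have "\<dots> \<le> pc_YgZ P (merge_channel y' u)"
    unfolding pc_YgZ_def
  proof (rule sum_mono)
    fix z
    have "qY P z * (1 - u z) \<le> qY P z * merge_channel y' u z z"
      using u qY_nonneg[OF pmf, of z] by (intro mult_left_mono) (auto simp: merge_channel_def)
    also have "\<dots> \<le> Max (range (\<lambda>y. qY P y * merge_channel y' u y z))" by (rule Max_ge) auto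
    finally show "qY P z * (1 - u z) \<le> Max (range (\<lambda>y. qY P y * merge_channel y' u y z))" .
  qed
  finally show ?thesis .
qed

lemma sum_merge_channel:
  fixes P :: "'a \<Rightarrow> 'b::finite \<Rightarrow> real"
  shows "(\<Sum>y\<in>UNIV. P x y * merge_channel y' u y z)
     = (if z = y' then (\<Sum>y\<in>UNIV. P x y * u y) else 0) + P x z * (1 - u z)"
proof -
  have "(\<Sum>y\<in>UNIV. P x y * merge_channel y' u y z)
      = (\<Sum>y\<in>UNIV. (if z = y' then P x y * u y else 0) + (if y = z then P x z * (1 - u z) else 0))"
    by (rule sum.cong) (auto simp: merge_channel_def distrib_left)
  then show ?thesis by (simp add: sum.distrib)
qed

lemma Max_merged_column_le:
  assumes pmf: "is_pmf2 P" and u: "\<forall>y. 0 \<le> u y" "\<forall>y. u y \<le> 1" "u y' = 0"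
    and outside: "\<forall>x. x \<notin> argmax_col P y' \<longrightarrow> P x y' + (\<Sum>y\<in>UNIV. u y) \<le> col_max P y'"
    and inside: "\<forall>x\<in>argmax_col P y'. t \<le> (\<Sum>y\<in>UNIV. u y * (col_max P y - P x y))"
  shows "Max (range (\<lambda>x. \<Sum>y\<in>UNIV. P x y * merge_channel y' u y z))
      \<le> col_max P z * (1 - u z) + (if z = y' then (\<Sum>y\<in>UNIV. u y * col_max P y) - t else 0)"
proof (rule Max.boundedI, simp, simp, clarify)
  fix x
  have loss: "(\<Sum>y\<in>UNIV. u y * (col_max P y - P x y))
      = (\<Sum>y\<in>UNIV. u y * col_max P y) - (\<Sum>y\<in>UNIV. P x y * u y)"
    by (simp add: right_diff_distrib sum_subtractf mult.commute)
  show "(\<Sum>y\<in>UNIV. P x y * merge_channel y' u y z)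
      \<le> col_max P z * (1 - u z) + (if z = y' then (\<Sum>y\<in>UNIV. u y * col_max P y) - t else 0)"
  proof (cases "z = y'")
    case False
    have "P x z * (1 - u z) \<le> col_max P z * (1 - u z)"
      by (rule mult_right_mono) (use col_max_ge[of P x z] u in auto)
    then show ?thesis using False by (simp add: sum_merge_channel)
  next
    case True
    show ?thesis
    proof (cases "x \<in> argmax_col P y'")
      case True
      then show ?thesis
        using inside loss \<open>z = y'\<close> u by (auto simp: sum_merge_channel argmax_col_def)
    next
      case False
      obtain x1 where "x1 \<in> argmax_col P y'" using argmax_col_nonempty by blast
      moreover have "(\<Sum>y\<in>UNIV. u y * (col_max P y - P x1 y)) \<le> (\<Sum>y\<in>UNIV. u y * col_max P y)"
        using u pmf_nonneg[OF pmf, of x1] by (intro sum_mono) (simp add: mult_left_mono)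
      ultimately have "0 \<le> (\<Sum>y\<in>UNIV. u y * col_max P y) - t" using inside by force
      moreover have "(\<Sum>y\<in>UNIV. P x y * u y) \<le> (\<Sum>y\<in>UNIV. u y)"
        using u pmf_nonneg[OF pmf] pmf_le_1[OF pmf]
        by (intro sum_mono mult_left_le_one_le) auto
      ultimately show ?thesis using outside False \<open>z = y'\<close> u by (force simp: sum_merge_channel)
    qed
  qed
qed

lemma pc_XgZ_merge_channel_le:
  assumes pmf: "is_pmf2 P" and u: "\<forall>y. 0 \<le> u y" "\<forall>y. u y \<le> 1" "u y' = 0"
    and outside: "\<forall>x. x \<notin> argmax_col P y' \<longrightarrow> P x y' + (\<Sum>y\<in>UNIV. u y) \<le> col_max P y'"
    and inside: "\<forall>x\<in>argmax_col P y'. t \<le> (\<Sum>y\<in>UNIV. u y * (col_max P y - P x y))"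
  shows "pc_XgZ P (merge_channel y' u) \<le> pc_XgY P - t"
proof -
  have "pc_XgZ P (merge_channel y' u) \<le> (\<Sum>z\<in>UNIV. col_max P z * (1 - u z)
      + (if z = y' then (\<Sum>y\<in>UNIV. u y * col_max P y) - t else 0))"
    unfolding pc_XgZ_def by (intro sum_mono Max_merged_column_le[OF pmf u outside inside])
  also have "\<dots> = pc_XgY P - t"
    by (simp add: sum.distrib pc_XgY_eq_sum_col_max algebra_simps sum_subtractf mult.commute)
  finally show ?thesis .
qed

definition weight_bound :: "('a::finite \<Rightarrow> 'b::finite \<Rightarrow> real) \<Rightarrow> real" where
  "weight_bound P = 1 + (\<Sum>y | 0 < qY P y. 1 / qY P y)"

definition min_gap :: "('a::finite \<Rightarrow> 'b::finite \<Rightarrow> real) \<Rightarrow> real" where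
  "min_gap P = Min (insert 1 {col_max P y - P x y | x y. P x y < col_max P y})"

text \<open>Below \<open>merge_margin P\<close>, a merging along weights of rate at least \<open>max_rate P / 2\<close> moves
  total mass at most \<open>min_gap P\<close>, so no non-maximiser of the target column overtakes the
  maximisers. The \<open>1\<close> in \<open>min_gap\<close> only guards against taking the minimum of an empty set.\<close>

definition merge_margin :: "('a::finite \<Rightarrow> 'b::finite \<Rightarrow> real) \<Rightarrow> real" where
  "merge_margin P = max_rate P * min_gap P / (2 * weight_bound P)"

lemma weight_bound_pos: "0 < weight_bound P"
proof -
  have "0 \<le> (\<Sum>y | 0 < qY P y. 1 / qY P y)" by (rule sum_nonneg) simp
  then show ?thesis by (simp add: weight_bound_def)
qed

lemma sum_le_weight_bound:
  assumes pmf: "is_pmf2 P" and v: "v \<in> shift_weights P y'"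
  shows "(\<Sum>y\<in>UNIV. v y) \<le> weight_bound P"
proof -
  have "(\<Sum>y\<in>UNIV. v y) = (\<Sum>y | 0 < qY P y. v y)"
    by (rule sum.mono_neutral_right)
      (use v qY_nonneg[OF pmf] in \<open>fastforce simp: shift_weights_def less_le\<close>)+
  also have "\<dots> \<le> (\<Sum>y | 0 < qY P y. 1 / qY P y)"
  proof (rule sum_mono)
    fix y assume "y \<in> {y. 0 < qY P y}"
    moreover have "qY P y * v y \<le> (\<Sum>y\<in>UNIV. qY P y * v y)"
      by (rule member_le_sum) (use v qY_nonneg[OF pmf] in \<open>auto simp: shift_weights_def\<close>)
    ultimately show "v y \<le> 1 / qY P y"
      using v by (simp add: shift_weights_def field_simps)
  qed
  finally show ?thesis by (simp add: weight_bound_def)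
qed

lemma finite_col_gaps: "finite {col_max P y - P x y | x y. P x y < col_max P y}"
  by (rule finite_subset[of _ "range (\<lambda>(x, y). col_max P y - P x y)"]) auto

lemma min_gap_pos: "0 < min_gap P"
  unfolding min_gap_def using finite_col_gaps by (subst Min_gr_iff) auto

lemma min_gap_le_1: "min_gap P \<le> 1"
  unfolding min_gap_def using finite_col_gaps by (intro Min_le) auto

lemma add_min_gap_le_col_max: "x \<notin> argmax_col P y \<Longrightarrow> P x y + min_gap P \<le> col_max P y"
proof -
  assume "x \<notin> argmax_col P y"
  then have "P x y < col_max P y" using col_max_ge[of P x y] by (auto simp: argmax_col_def)
  then have "min_gap P \<le> col_max P y - P x y"
    unfolding min_gap_def using finite_col_gaps by (intro Min_le) auto
  then show ?thesis by simp
qed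

lemma merge_margin_pos:
  assumes "is_pmf2 P" "pc_X P < pc_XgY P"
  shows "0 < merge_margin P"
  unfolding merge_margin_def
  using max_rate_pos[OF assms] min_gap_pos[of P] weight_bound_pos[of P] by simp

lemma merged_mass_le_min_gap:
  assumes pmf: "is_pmf2 P" and gap: "pc_X P < pc_XgY P"
    and v: "v \<in> shift_weights P y'" and rate: "max_rate P / 2 \<le> shift_rate P y' v"
    and t: "0 \<le> t" "t \<le> merge_margin P"
  shows "(\<Sum>y\<in>UNIV. t / shift_rate P y' v * v y) \<le> min_gap P"
proof -
  have M_pos: "0 < max_rate P" by (rule max_rate_pos[OF pmf gap])
  have "t / shift_rate P y' v \<le> merge_margin P / (max_rate P / 2)"
    by (rule frac_le) (use t rate M_pos in auto)
  also have "\<dots> = min_gap P / weight_bound P"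
    using M_pos weight_bound_pos[of P] by (simp add: merge_margin_def field_simps)
  finally have "t / shift_rate P y' v * (\<Sum>y\<in>UNIV. v y) \<le> min_gap P / weight_bound P * weight_bound P"
    using sum_le_weight_bound[OF pmf v] t rate M_pos v min_gap_pos[of P] weight_bound_pos[of P]
    by (intro mult_mono) (auto simp: shift_weights_def sum_nonneg)
  then show ?thesis using weight_bound_pos[of P] by (simp add: sum_distrib_left)
qed

lemma merge_channel_performance:
  assumes pmf: "is_pmf2 P" and gap: "pc_X P < pc_XgY P"
    and v: "v \<in> shift_weights P y'" and rate: "max_rate P / 2 \<le> shift_rate P y' v"
    and t: "0 \<le> t" "t \<le> merge_margin P"
  defines "W \<equiv> merge_channel y' (\<lambda>y. t / shift_rate P y' v * v y)"
  shows "is_channel W" and "pc_XgZ P W \<le> pc_XgY P - t"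
    and "1 - t / shift_rate P y' v \<le> pc_YgZ P W"
proof -
  define K where "K = shift_rate P y' v"
  define \<gamma> where "\<gamma> = t / K"
  define u where "u y = \<gamma> * v y" for y
  have M_pos: "0 < max_rate P" by (rule max_rate_pos[OF pmf gap])
  have K_pos: "0 < K" using rate M_pos by (simp add: K_def)
  have \<gamma>_nonneg: "0 \<le> \<gamma>" using t K_pos by (simp add: \<gamma>_def)
  have sum_u: "(\<Sum>y\<in>UNIV. u y) \<le> min_gap P"
    using merged_mass_le_min_gap[OF pmf gap v rate t] by (simp add: u_def \<gamma>_def K_def)
  have u_nonneg: "\<forall>y. 0 \<le> u y" using v \<gamma>_nonneg by (simp add: u_def shift_weights_def)
  have u_le_1: "\<forall>y. u y \<le> 1"
  proof
    fix y
    have "u y \<le> (\<Sum>y\<in>UNIV. u y)" by (rule member_le_sum) (use u_nonneg in auto)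
    then show "u y \<le> 1" using sum_u min_gap_le_1[of P] by linarith
  qed
  have u_y': "u y' = 0" using v by (simp add: u_def shift_weights_def)
  have outside: "\<forall>x. x \<notin> argmax_col P y' \<longrightarrow> P x y' + (\<Sum>y\<in>UNIV. u y) \<le> col_max P y'"
    using add_min_gap_le_col_max sum_u by fastforce
  have inside: "\<forall>x\<in>argmax_col P y'. t \<le> (\<Sum>y\<in>UNIV. u y * (col_max P y - P x y))"
  proof
    fix x assume x: "x \<in> argmax_col P y'"
    have "t = \<gamma> * K" using K_pos by (simp add: \<gamma>_def)
    also have "\<dots> \<le> \<gamma> * (\<Sum>y\<in>UNIV. v y * (col_max P y - P x y))"
      using shift_rate_le[OF x, of v] \<gamma>_nonneg by (simp add: K_def mult_left_mono)
    also have "\<dots> = (\<Sum>y\<in>UNIV. u y * (col_max P y - P x y))"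
      by (simp add: u_def sum_distrib_left mult.assoc)
    finally show "t \<le> (\<Sum>y\<in>UNIV. u y * (col_max P y - P x y))" .
  qed
  have W_eq: "W = merge_channel y' u" by (simp add: W_def u_def[abs_def] \<gamma>_def K_def)
  show "is_channel W" unfolding W_eq using u_nonneg u_le_1 by (simp add: is_channel_merge_channel)
  show "pc_XgZ P W \<le> pc_XgY P - t"
    unfolding W_eq by (rule pc_XgZ_merge_channel_le[OF pmf u_nonneg u_le_1 u_y' outside inside])
  have "(\<Sum>y\<in>UNIV. qY P y * u y) = \<gamma> * (\<Sum>y\<in>UNIV. qY P y * v y)"
    by (simp add: u_def sum_distrib_left algebra_simps)
  then have "(\<Sum>y\<in>UNIV. qY P y * u y) = \<gamma>" using v by (simp add: shift_weights_def)
  then show "1 - t / shift_rate P y' v \<le> pc_YgZ P W"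
    unfolding W_eq using pc_YgZ_merge_channel_ge[OF pmf u_nonneg, of y'] by (simp add: \<gamma>_def K_def)
qed

lemma one_minus_div_Sup_le:
  fixes S :: "real set"
  assumes S: "S \<noteq> {}" "bdd_above S" and a: "0 \<le> a" "a < Sup S" and t: "0 \<le> t"
    and bound: "\<And>K. K \<in> S \<Longrightarrow> a < K \<Longrightarrow> 1 - t / K \<le> h"
  shows "1 - t / Sup S \<le> h"
proof (rule ccontr)
  assume "\<not> ?thesis"
  then have h_lt: "h < 1 - t / Sup S" by simp
  have Sup_pos: "0 < Sup S" using a by linarith
  then have h_lt_1: "0 < 1 - h" using h_lt divide_nonneg_pos[OF t] by fastforce
  have "t / (1 - h) < Sup S"
    using h_lt Sup_pos h_lt_1 by (simp add: pos_divide_less_eq field_simps)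
  then obtain K where K: "K \<in> S" "max a (t / (1 - h)) < K"
    using less_cSupD[OF S(1)] a by (metis max_less_iff_conj)
  then have "t < K * (1 - h)" using h_lt_1 by (simp add: pos_divide_less_eq)
  then have "h < 1 - t / K" using K a by (simp add: field_simps)
  then show False using bound K by fastforce
qed

lemma h_low_eq_near_pc_XgY:
  assumes pmf: "is_pmf2 P" and gap: "pc_X P < pc_XgY P"
    and \<epsilon>: "pc_XgY P - merge_margin P \<le> \<epsilon>" "\<epsilon> \<le> pc_XgY P"
  shows "h_low P \<epsilon> = 1 - (pc_XgY P - \<epsilon>) / max_rate P"
proof -
  define t where "t = pc_XgY P - \<epsilon>"
  have t: "0 \<le> t" "t \<le> merge_margin P" using \<epsilon> by (auto simp: t_def)
  have M_pos: "0 < max_rate P" by (rule max_rate_pos[OF pmf gap])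
  have merged_rate: "1 - t / K \<le> h_low P \<epsilon>"
    if K_rate: "K \<in> shift_rates P" and K_large: "max_rate P / 2 < K" for K
  proof -
    obtain y' v where v: "v \<in> shift_weights P y'" and K: "K = shift_rate P y' v"
      using K_rate unfolding shift_rates_def by blast
    note perf = merge_channel_performance[OF pmf gap v _ t]
    have "max_rate P / 2 \<le> shift_rate P y' v" using K_large K by simp
    then show ?thesis using perf h_low_ge[OF pmf perf(1)] by (fastforce simp: K t_def)
  qed
  have "max_rate P / 2 < Sup (shift_rates P)" using M_pos by (simp add: max_rate_def)
  then obtain K where K: "K \<in> shift_rates P" "max_rate P / 2 < K"
    using less_cSupD[OF shift_rates_nonempty[OF pmf gap]] by blast
  then obtain y' v where v: "v \<in> shift_weights P y'" and "max_rate P / 2 \<le> shift_rate P y' v"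
    unfolding shift_rates_def by force
  note perf = merge_channel_performance[OF pmf gap this t]
  have "h_low P \<epsilon> \<le> 1 - t / max_rate P"
  proof (rule h_low_le)
    show "is_channel (merge_channel y' (\<lambda>y. t / shift_rate P y' v * v y))" by (rule perf(1))
    show "pc_XgZ P (merge_channel y' (\<lambda>y. t / shift_rate P y' v * v y)) \<le> \<epsilon>"
      using perf(2) by (simp add: t_def)
    fix W assume W: "is_channel W" "pc_XgZ P W \<le> \<epsilon>"
    have "t \<le> max_rate P * (1 - pc_YgZ P W)"
      using pc_XgY_minus_pc_XgZ_le[OF pmf W(1)] W(2) by (simp add: t_def)
    then show "pc_YgZ P W \<le> 1 - t / max_rate P" using M_pos by (simp add: field_simps)
  qed
  moreover have "1 - t / max_rate P \<le> h_low P \<epsilon>"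
    using one_minus_div_Sup_le[where a = "max_rate P / 2", OF shift_rates_nonempty[OF pmf gap]
        bdd_above_shift_rates[OF pmf] _ _ t(1) merged_rate] M_pos
    by (simp add: max_rate_def)
  ultimately show ?thesis by (simp add: t_def)
qed

lemma has_real_derivative_at_left_if_affine:
  fixes f :: "real \<Rightarrow> real"
  assumes "a < c" and affine: "\<And>x. a \<le> x \<Longrightarrow> x \<le> c \<Longrightarrow> f x = b - (c - x) * d"
  shows "(f has_real_derivative d) (at_left c)"
proof -
  have "((\<lambda>x. b - (c - x) * d) has_real_derivative d) (at c within {..c})"
    by (auto intro!: derivative_eq_intros)
  then have "(f has_real_derivative d) (at c within {..c})"
  proof (rule has_field_derivative_transform_within)
    show "0 < c - a" "c \<in> {..c}" using assms by auto
    show "b - (c - x) * d = f x" if "x \<in> {..c}" "dist x c < c - a" for x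
      using that affine by (simp add: dist_real_def)
  qed
  then show ?thesis by (rule DERIV_subset) auto
qed

lemma col_max_unique_argmax:
  assumes "\<And>x. x \<noteq> xs y \<Longrightarrow> P x y < P (xs y) y"
  shows "col_max P y = P (xs y) y" and "argmax_col P y = {xs y}"
proof -
  obtain x where x: "P x y = col_max P y"
    using argmax_col_nonempty[of P y] unfolding argmax_col_def by blast
  show max: "col_max P y = P (xs y) y"
    using col_max_ge[of P "xs y" y] assms[of x] x by (cases "x = xs y") auto
  show "argmax_col P y = {xs y}" using assms by (force simp: argmax_col_def max)
qed

lemma shift_rate_unique_argmax:
  assumes "\<forall>y x. x \<noteq> xs y \<longrightarrow> P x y < P (xs y) y"
  shows "shift_rate P z v = (\<Sum>y\<in>UNIV. v y * (P (xs y) y - P (xs z) y))"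
  using col_max_unique_argmax[of xs _ P] assms by (simp add: shift_rate_def)

lemma point_mass_in_shift_weights:
  assumes "y \<noteq> z" "0 < qY P y"
  shows "(\<lambda>w. if w = y then 1 / qY P y else 0) \<in> shift_weights P z"
  using assms by (auto simp: shift_weights_def if_distrib cong: if_cong)

lemma shift_rate_point_mass:
  assumes "\<forall>y x. x \<noteq> xs y \<longrightarrow> P x y < P (xs y) y"
  shows "shift_rate P z (\<lambda>w. if w = y then 1 / qY P y else 0) = (P (xs y) y - P (xs z) y) / qY P y"
proof -
  have "(\<Sum>w\<in>UNIV. (if w = y then 1 / qY P y else 0) * (P (xs w) w - P (xs z) w))
      = (\<Sum>w\<in>UNIV. if w = y then (P (xs y) y - P (xs z) y) / qY P y else 0)"
    by (rule sum.cong) auto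
  then show ?thesis by (simp add: shift_rate_unique_argmax[OF assms])
qed

lemma max_rate_unique_argmax:
  assumes pmf: "is_pmf2 P" and gap: "pc_X P < pc_XgY P"
    and q: "\<forall>y. 0 < qY P y" and argmax: "\<forall>y x. x \<noteq> xs y \<longrightarrow> P x y < P (xs y) y"
  shows "max_rate P = Max (range (\<lambda>(y, z). (P (xs y) y - P (xs z) y) / qY P y))"
    (is "_ = Max (range ?ratio)")
proof (rule antisym)
  have deficit_le: "P (xs y) y - P (xs z) y \<le> Max (range ?ratio) * qY P y" for y z
  proof -
    have "?ratio (y, z) \<le> Max (range ?ratio)" by (rule Max_ge) auto
    then show ?thesis using q by (simp add: pos_divide_le_eq)
  qed
  show "max_rate P \<le> Max (range ?ratio)"
    unfolding max_rate_def
  proof (rule cSup_least[OF shift_rates_nonempty[OF pmf gap]])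
    fix K assume "K \<in> shift_rates P"
    then obtain z v where v: "v \<in> shift_weights P z" and K: "K = shift_rate P z v"
      unfolding shift_rates_def by blast
    have "K \<le> (\<Sum>y\<in>UNIV. v y * (Max (range ?ratio) * qY P y))"
      unfolding K shift_rate_unique_argmax[OF argmax]
      by (intro sum_mono mult_left_mono deficit_le) (use v in \<open>auto simp: shift_weights_def\<close>)
    also have "\<dots> = (\<Sum>y\<in>UNIV. qY P y * v y) * Max (range ?ratio)"
      by (simp add: sum_distrib_right mult_ac)
    also have "\<dots> = Max (range ?ratio)" using v by (simp add: shift_weights_def)
    finally show "K \<le> Max (range ?ratio)" .
  qed
  have "?ratio (y, z) \<le> max_rate P" for y z
  proof (cases "y = z")
    case True
    then show ?thesis using max_rate_pos[OF pmf gap] by simp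
  next
    case False
    note v = point_mass_in_shift_weights[OF False q[rule_format, of y]]
    show ?thesis using shift_rate_le_max_rate[OF pmf v] by (simp add: shift_rate_point_mass[OF argmax])
  qed
  then show "Max (range ?ratio) \<le> max_rate P" by (intro Max.boundedI) auto
qed

lemma Min_ratio_eq_inverse_max_rate:
  assumes pmf: "is_pmf2 P" and gap: "pc_X P < pc_XgY P"
    and q: "\<forall>y. 0 < qY P y" and argmax: "\<forall>y x. x \<noteq> xs y \<longrightarrow> P x y < P (xs y) y"
  shows "Min (range (\<lambda>(y, z). ratio P xs y z)) = ereal (1 / max_rate P)"
proof -
  let ?ratio = "\<lambda>(y, z). (P (xs y) y - P (xs z) y) / qY P y"
  note M_eq = max_rate_unique_argmax[OF pmf gap q argmax]
  have M_pos: "0 < max_rate P" by (rule max_rate_pos[OF pmf gap])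
  have lower: "ereal (1 / max_rate P) \<le> ratio P xs y z" for y z
  proof -
    have "?ratio (y, z) \<le> max_rate P" unfolding M_eq by (rule Max_ge) auto
    then show ?thesis
      using M_pos q[rule_format, of y] argmax[rule_format, of "xs z" y]
      by (cases "xs z = xs y") (auto simp: ratio_def field_simps)
  qed
  have "Max (range ?ratio) \<in> range ?ratio" by (rule Max_in) auto
  then obtain p where p: "max_rate P = ?ratio p" unfolding M_eq by blast
  obtain y z where "p = (y, z)" by fastforce
  with p have "max_rate P = ?ratio (y, z)" by simp
  then have "ratio P xs y z = ereal (1 / max_rate P)"
    using M_pos q[rule_format, of y] by (auto simp: ratio_def)
  then show ?thesis using lower by (intro Min_eqI) (auto intro: range_eqI[of _ _ "(y, z)"])
qed

lemma zchan_eq_merge_channel: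
  "y0 \<noteq> z0 \<Longrightarrow> zchan y0 z0 \<gamma> = merge_channel z0 (\<lambda>y. if y = y0 then \<gamma> else 0)"
  by (intro ext) (auto simp: zchan_def merge_channel_def)

lemma zchan_achieves_h_low:
  assumes pmf: "is_pmf2 P" and gap: "pc_X P < pc_XgY P"
    and q: "\<forall>y. 0 < qY P y" and argmax: "\<forall>y x. x \<noteq> xs y \<longrightarrow> P x y < P (xs y) y"
    and min: "ratio P xs y0 z0 = Min (range (\<lambda>(y, z). ratio P xs y z))"
    and \<epsilon>: "pc_XgY P - merge_margin P \<le> \<epsilon>" "\<epsilon> \<le> pc_XgY P"
  shows "achieves P (zchan y0 z0 ((pc_XgY P - \<epsilon>) / (P (xs y0) y0 - P (xs z0) y0))) \<epsilon>"
proof -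
  define D where "D = P (xs y0) y0 - P (xs z0) y0"
  define t where "t = pc_XgY P - \<epsilon>"
  define v where "v = (\<lambda>w. if w = y0 then 1 / qY P y0 else 0)"
  have M_pos: "0 < max_rate P" by (rule max_rate_pos[OF pmf gap])
  have "ratio P xs y0 z0 = ereal (1 / max_rate P)"
    using min Min_ratio_eq_inverse_max_rate[OF pmf gap q argmax] by simp
  then have "D \<noteq> 0" and "qY P y0 / D = 1 / max_rate P"
    by (auto simp: ratio_def D_def split: if_splits)
  then have D: "D = max_rate P * qY P y0" using M_pos by (auto simp: field_simps)
  have "y0 \<noteq> z0" using \<open>D \<noteq> 0\<close> by (auto simp: D_def)
  have v: "v \<in> shift_weights P z0"
    unfolding v_def by (rule point_mass_in_shift_weights) (use \<open>y0 \<noteq> z0\<close> q in auto)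
  have rate: "shift_rate P z0 v = max_rate P"
    using D q[rule_format, of y0] by (simp add: v_def shift_rate_point_mass[OF argmax] D_def)
  have W: "merge_channel z0 (\<lambda>y. t / max_rate P * v y) = zchan y0 z0 (t / D)"
    unfolding zchan_eq_merge_channel[OF \<open>y0 \<noteq> z0\<close>] v_def D
    by (intro arg_cong[where f = "merge_channel z0"]) (simp add: fun_eq_iff)
  have half: "max_rate P / 2 \<le> shift_rate P z0 v" using rate M_pos by simp
  have t: "0 \<le> t" "t \<le> merge_margin P" using \<epsilon> by (auto simp: t_def)
  note perf = merge_channel_performance[OF pmf gap v half t, unfolded rate W]
  have feasible: "pc_XgZ P (zchan y0 z0 (t / D)) \<le> \<epsilon>" using perf(2) by (simp add: t_def)
  have "h_low P \<epsilon> = 1 - t / max_rate P"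
    using h_low_eq_near_pc_XgY[OF pmf gap \<epsilon>] by (simp add: t_def)
  then have "pc_YgZ P (zchan y0 z0 (t / D)) = h_low P \<epsilon>"
    using perf(3) h_low_ge[OF pmf perf(1) feasible] by linarith
  then show ?thesis using perf(1) feasible by (simp add: achieves_def t_def D_def)
qed

theorem theorem3:
  fixes P :: "'a::finite \<Rightarrow> 'b::finite \<Rightarrow> real"
  assumes pmf: "is_pmf2 P"
    and gap: "pc_X P < pc_XgY P"
  shows "\<exists>\<epsilon>L d. pc_X P < \<epsilon>L \<and> \<epsilon>L < pc_XgY P
     \<and> (h_low P has_real_derivative d) (at_left (pc_XgY P))
     \<and> (\<forall>\<epsilon>. \<epsilon>L \<le> \<epsilon> \<and> \<epsilon> \<le> pc_XgY P \<longrightarrow> h_low P \<epsilon> = 1 - (pc_XgY P - \<epsilon>) * d)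
     \<and> (\<forall>xs :: 'b \<Rightarrow> 'a.
          (\<forall>y. 0 < qY P y) \<and> (\<forall>y x. x \<noteq> xs y \<longrightarrow> P x y / qY P y < P (xs y) y / qY P y)
          \<longrightarrow> ereal d = Min (range (\<lambda>(y, z). ratio P xs y z))
            \<and> (\<forall>y0 z0. ratio P xs y0 z0 = Min (range (\<lambda>(y, z). ratio P xs y z)) \<longrightarrow>
                 (\<exists>\<epsilon>L'. pc_X P \<le> \<epsilon>L' \<and> \<epsilon>L' < pc_XgY P \<and>
                    (\<forall>\<epsilon>. \<epsilon>L' \<le> \<epsilon> \<and> \<epsilon> \<le> pc_XgY P \<longrightarrow>
                       achieves P (zchan y0 z0
                          ((pc_XgY P - \<epsilon>) / (P (xs y0) y0 - P (xs z0) y0))) \<epsilon>))))"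
proof -
  define \<epsilon>L where "\<epsilon>L = max (pc_XgY P - merge_margin P) ((pc_X P + pc_XgY P) / 2)"
  have \<epsilon>L: "pc_X P < \<epsilon>L" "\<epsilon>L < pc_XgY P" "pc_XgY P - merge_margin P \<le> \<epsilon>L"
    using gap merge_margin_pos[OF pmf gap] by (auto simp: \<epsilon>L_def less_max_iff_disj)
  have affine: "h_low P \<epsilon> = 1 - (pc_XgY P - \<epsilon>) * (1 / max_rate P)"
    if "\<epsilon>L \<le> \<epsilon>" "\<epsilon> \<le> pc_XgY P" for \<epsilon>
    using h_low_eq_near_pc_XgY[OF pmf gap] \<epsilon>L(3) that by simp
  show ?thesis
  proof (rule exI[of _ \<epsilon>L], rule exI[of _ "1 / max_rate P"], intro conjI allI impI)
    show "pc_X P < \<epsilon>L" "\<epsilon>L < pc_XgY P" by (fact \<epsilon>L(1), fact \<epsilon>L(2))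
    show "(h_low P has_real_derivative 1 / max_rate P) (at_left (pc_XgY P))"
      by (rule has_real_derivative_at_left_if_affine[OF \<epsilon>L(2) affine])
    show "h_low P \<epsilon> = 1 - (pc_XgY P - \<epsilon>) * (1 / max_rate P)"
      if "\<epsilon>L \<le> \<epsilon> \<and> \<epsilon> \<le> pc_XgY P" for \<epsilon>
      using that by (simp add: affine)
  next
    fix xs :: "'b \<Rightarrow> 'a"
    assume "(\<forall>y. 0 < qY P y) \<and> (\<forall>y x. x \<noteq> xs y \<longrightarrow> P x y / qY P y < P (xs y) y / qY P y)"
    then have q: "\<forall>y. 0 < qY P y" and argmax: "\<forall>y x. x \<noteq> xs y \<longrightarrow> P x y < P (xs y) y"
      by (auto simp: divide_less_cancel)
    show "ereal (1 / max_rate P) = Min (range (\<lambda>(y, z). ratio P xs y z))"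
      using Min_ratio_eq_inverse_max_rate[OF pmf gap q argmax] by simp
    fix y0 z0
    assume "ratio P xs y0 z0 = Min (range (\<lambda>(y, z). ratio P xs y z))"
    then show "\<exists>\<epsilon>L'. pc_X P \<le> \<epsilon>L' \<and> \<epsilon>L' < pc_XgY P \<and>
        (\<forall>\<epsilon>. \<epsilon>L' \<le> \<epsilon> \<and> \<epsilon> \<le> pc_XgY P \<longrightarrow>
          achieves P (zchan y0 z0 ((pc_XgY P - \<epsilon>) / (P (xs y0) y0 - P (xs z0) y0))) \<epsilon>)"
      using \<epsilon>L zchan_achieves_h_low[OF pmf gap q argmax] by (intro exI[of _ \<epsilon>L]) auto
  qed
qed

end
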